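(* Let $\varphi=\frac{1+\sqrt5}{2}$. The power series $[\varphi]_q\in\mathbb{Z}[[q]]$ satisfies $$q[\varphi]_q^2-(q^2+q-1)[\varphi]_q-1=0.$$
   Context: For an integer $a\geq1$ put $[a]_q=1+q+\cdots+q^{a-1}$ and $[a]_{q^{-1}}=1+q^{-1}+\cdots+q^{-(a-1)}$. Every rational number $r/s>1$ has a unique even-length regular continued fraction $r/s=[a_1,\ldots,a_{2m}]$ with $a_i\in\mathbb{Z}_{\geq1}$. Its $q$-deformation is the rational function $$\left[\tfrac{r}{s}\right]_q=[a_1]_q+\cfrac{q^{a_1}}{[a_2]_{q^{-1}}+\cfrac{q^{-a_2}}{[a_3]_q+\cfrac{q^{a_3}}{\ddots+\cfrac{q^{a_{2m-1}}}{[a_{2m}]_{q^{-1}}}}}}.$$ One also sets $[1]_q=1$. Each $[r/s]_q$ is identified with its Taylor expansion at $q=0$. For an irrational real number $x>1$ with continued fraction $x=[a_1,a_2,\ldots]$ and convergents $x_n=[a_1,\ldots,a_n]$, define $$[x]_q:=\sum_{k\geq0}\varkappa_kq^k,\qquad \varkappa_k=\lim_{n\to\infty}\bigl(\text{coefficient of }q^k\text{ in }[x_n]_q\bigr).$$ These limits exist and are eventually attained. Here $\varphi=[1,1,1,\ldots]$. *)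

theory Defs
  imports Complex_Main "HOL-Computational_Algebra.Formal_Laurent_Series"
begin

text \<open>Rational functions in q are identified with their Laurent expansions at q = 0
  (real coefficients); q is fls_X, q^(-1) is fls_X_inv.\<close>

definition qint :: "nat \<Rightarrow> real fls" where
  "qint a = (\<Sum>i<a. fls_X ^ i)"

definition qint_inv :: "nat \<Rightarrow> real fls" where
  "qint_inv a = (\<Sum>i<a. fls_X_inv ^ i)"

fun qcf_aux :: "bool \<Rightarrow> nat list \<Rightarrow> real fls" where
  "qcf_aux b [] = 0"
| "qcf_aux b [a] = (if b then qint a else qint_inv a)"
| "qcf_aux b (a # a' # as) =
     (if b then qint a + fls_X ^ a / qcf_aux False (a' # as)
      else qint_inv a + fls_X_inv ^ a / qcf_aux True (a' # as))"

definition qcf :: "nat list \<Rightarrow> real fls" where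
  "qcf as = qcf_aux True as"

fun cf_val :: "nat list \<Rightarrow> real" where
  "cf_val [] = 0"
| "cf_val [a] = real a"
| "cf_val (a # a' # as) = real a + 1 / cf_val (a' # as)"

definition qrat :: "real \<Rightarrow> real fls" where
  "qrat x = (if x = 1 then 1 else
     qcf (THE as. as \<noteq> [] \<and> even (length as) \<and> (\<forall>a\<in>set as. a \<ge> 1) \<and> cf_val as = x))"

fun cf_rem :: "real \<Rightarrow> nat \<Rightarrow> real" where
  "cf_rem x 0 = x"
| "cf_rem x (Suc n) = 1 / (cf_rem x n - of_int \<lfloor>cf_rem x n\<rfloor>)"

definition cf_digit :: "real \<Rightarrow> nat \<Rightarrow> nat" where
  "cf_digit x n = nat \<lfloor>cf_rem x n\<rfloor>"

text \<open>n-th convergent x_n = [a_1,...,a_n] (n \<ge> 1).\<close>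
definition convergent_cf :: "real \<Rightarrow> nat \<Rightarrow> real" where
  "convergent_cf x n = cf_val (map (cf_digit x) [0..<n])"

definition qreal :: "real \<Rightarrow> real fps" where
  "qreal x = Abs_fps (\<lambda>k. lim (\<lambda>n. fls_nth (qrat (convergent_cf x (Suc n))) (int k)))"

definition golden :: real where
  "golden = (1 + sqrt 5) / 2"

end

theory Submission
  imports Defs
begin

text \<open>Since \<open>\<phi> = [1, 1, \<phi>]\<close>, one expects \<open>[\<phi>]\<^sub>q\<close> to be a fixed point of the q-analogue
  \<open>T b = 1 + q\<^sup>2 b / (1 + q b)\<close> of \<open>x \<mapsto> [1, 1, x]\<close>, and \<open>T b = b\<close> is exactly the claimed
  quadratic equation once the denominator \<open>1 + q b\<close> is cleared.
  The convergents of \<open>\<phi>\<close> are \<open>[1, \<dots>, 1]\<close>; writing an odd number of ones as the even-length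
  expansion \<open>[1, \<dots>, 1, 2]\<close>, their q-deformations are iterates of \<open>T\<close> applied to \<open>1\<close> or to \<open>1 + q\<close>.
  The map \<open>T\<close> contracts q-adically: if \<open>f\<close> and \<open>g\<close> agree below degree \<open>k\<close>, then \<open>T f\<close> and
  \<open>T g\<close> agree below degree \<open>k + 2\<close>. Hence the coefficients of the iterates stabilise, and the
  limiting power series is a fixed point of \<open>T\<close>.\<close>

definition prepend11 :: "'a::field fps \<Rightarrow> 'a fps" where
  "prepend11 b = 1 + fps_X\<^sup>2 * b * inverse (1 + fps_X * b)"

lemma one_plus_X_mult_inverse: "(1 + fps_X * b) * inverse (1 + fps_X * b) = (1 :: 'a::field fps)"
  by (rule inverse_mult_eq_1') simp

lemma prepend11_cleared: "(1 + fps_X * b) * prepend11 b = 1 + fps_X * b + fps_X\<^sup>2 * b"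
proof -
  have "(1 + fps_X * b) * prepend11 b
      = (1 + fps_X * b) + fps_X\<^sup>2 * b * ((1 + fps_X * b) * inverse (1 + fps_X * b))"
    unfolding prepend11_def by (simp add: algebra_simps)
  then show ?thesis
    by (simp add: one_plus_X_mult_inverse)
qed

lemma prepend11_nth_0 [simp]: "prepend11 b $ 0 = 1"
  by (simp add: prepend11_def power2_eq_square mult.assoc)

lemma funpow_prepend11_nth_0 [simp]: "b $ 0 = 1 \<Longrightarrow> (prepend11 ^^ n) b $ 0 = 1"
  by (cases n) simp_all

lemma prepend11_diff:
  "prepend11 f - prepend11 g =
     fps_X\<^sup>2 * (f - g) * (inverse (1 + fps_X * f) * inverse (1 + fps_X * g))"
proof -
  define u where "u = inverse (1 + fps_X * f)"
  define v where "v = inverse (1 + fps_X * g)"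
  have u: "(1 + fps_X * f) * u = 1" and v: "(1 + fps_X * g) * v = 1"
    unfolding u_def v_def by (simp_all add: one_plus_X_mult_inverse)
  have "f * u - g * v = f * u * ((1 + fps_X * g) * v) - g * v * ((1 + fps_X * f) * u)"
    unfolding u v by simp
  also have "\<dots> = (f - g) * (u * v)"
    by (simp add: algebra_simps)
  finally have "f * u - g * v = (f - g) * (u * v)" .
  moreover have "prepend11 f - prepend11 g = fps_X\<^sup>2 * (f * u - g * v)"
    unfolding prepend11_def u_def v_def by (simp add: algebra_simps)
  ultimately show ?thesis
    unfolding u_def v_def by (simp add: mult.assoc)
qed

definition fps_eq_below :: "nat \<Rightarrow> 'a::zero fps \<Rightarrow> 'a fps \<Rightarrow> bool" where
  "fps_eq_below k f g \<longleftrightarrow> (\<forall>i<k. f $ i = g $ i)"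

lemma fps_eq_below_nth: "fps_eq_below k f g \<Longrightarrow> i < k \<Longrightarrow> f $ i = g $ i"
  by (simp add: fps_eq_below_def)

lemma fps_eq_below_iff_diff:
  "fps_eq_below k f g \<longleftrightarrow> f - g = fps_X ^ k * fps_shift k (f - g)"
  for f g :: "'a::comm_ring_1 fps"
proof
  assume "fps_eq_below k f g"
  then show "f - g = fps_X ^ k * fps_shift k (f - g)"
    unfolding fps_eq_below_def by (intro fps_ext) (simp add: fps_X_power_mult_nth)
next
  assume "f - g = fps_X ^ k * fps_shift k (f - g)"
  then have "(f - g) $ i = 0" if "i < k" for i
    using that by (metis fps_X_power_mult_nth)
  then show "fps_eq_below k f g"
    unfolding fps_eq_below_def by simp
qed

lemma fps_eq_below_prepend11:
  assumes "fps_eq_below k f g"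
  shows "fps_eq_below (k + 2) (prepend11 f) (prepend11 g)"
proof -
  define w where "w = inverse (1 + fps_X * f) * inverse (1 + fps_X * g)"
  have "prepend11 f - prepend11 g = fps_X\<^sup>2 * (fps_X ^ k * fps_shift k (f - g)) * w"
    using assms unfolding prepend11_diff w_def fps_eq_below_iff_diff by metis
  also have "\<dots> = fps_X ^ (k + 2) * (fps_shift k (f - g) * w)"
    by (simp only: power_add mult_ac)
  finally have "(prepend11 f - prepend11 g) $ i = 0" if "i < k + 2" for i
    using that by (simp only: fps_X_power_mult_nth if_True)
  then show ?thesis
    unfolding fps_eq_below_def by simp
qed

lemma fps_eq_below_funpow_prepend11:
  "fps_eq_below k f g \<Longrightarrow> fps_eq_below (k + 2 * n) ((prepend11 ^^ n) f) ((prepend11 ^^ n) g)"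
proof (induction n)
  case (Suc n)
  from fps_eq_below_prepend11[OF Suc.IH[OF Suc.prems]] show ?case
    by (simp add: add.assoc)
qed simp

lemma funpow_prepend11_stable:
  assumes "b $ 0 = 1" and "k \<le> m"
  shows "fps_eq_below (2 * k + 1) ((prepend11 ^^ m) b) ((prepend11 ^^ k) 1)"
proof -
  obtain d where m: "m = k + d"
    using assms(2) le_Suc_ex by blast
  have "fps_eq_below 1 ((prepend11 ^^ d) b) 1"
    using assms(1) by (simp add: fps_eq_below_def)
  then have "fps_eq_below (1 + 2 * k) ((prepend11 ^^ k) ((prepend11 ^^ d) b)) ((prepend11 ^^ k) 1)"
    by (rule fps_eq_below_funpow_prepend11)
  then show ?thesis
    unfolding m funpow_add comp_apply by (simp only: add.commute)
qed

text \<open>The diagonal \<open>k \<mapsto> (T\<^sup>k 1)\<^sub>k\<close> already reads off the stable coefficients.\<close>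

definition qgolden :: "'a::field fps" where
  "qgolden = Abs_fps (\<lambda>k. (prepend11 ^^ k) 1 $ k)"

lemma funpow_prepend11_nth_eq_qgolden:
  assumes "b $ 0 = 1" and "k \<le> m"
  shows "(prepend11 ^^ m) b $ k = qgolden $ k"
  using funpow_prepend11_stable[OF assms] by (simp add: fps_eq_below_def qgolden_def)

lemma fps_eq_below_qgolden: "fps_eq_below (2 * n + 1) qgolden ((prepend11 ^^ n) 1)"
  unfolding fps_eq_below_def
proof (intro allI impI)
  fix i assume "i < 2 * n + 1"
  then show "qgolden $ i = (prepend11 ^^ n) 1 $ i"
  proof (cases "i \<le> n")
    case True
    then show ?thesis
      using funpow_prepend11_nth_eq_qgolden[of 1 i n, symmetric] by simp
  next
    case False
    then show ?thesis
      using fps_eq_below_nth[OF funpow_prepend11_stable[of 1 n i] \<open>i < 2 * n + 1\<close>]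
      by (simp add: qgolden_def)
  qed
qed

lemma prepend11_qgolden: "prepend11 qgolden = qgolden"
proof (rule fps_ext)
  fix i
  have "fps_eq_below (2 * i + 1 + 2) (prepend11 qgolden) ((prepend11 ^^ Suc i) 1)"
    using fps_eq_below_prepend11[OF fps_eq_below_qgolden[of i]] by simp
  then have "prepend11 qgolden $ i = (prepend11 ^^ Suc i) 1 $ i"
    by (rule fps_eq_below_nth) simp
  also have "\<dots> = qgolden $ i"
    using fps_eq_below_qgolden[of "Suc i"] by (rule fps_eq_below_nth[symmetric]) simp
  finally show "prepend11 qgolden $ i = qgolden $ i" .
qed

lemma qgolden_quadratic:
  "fps_X * qgolden\<^sup>2 - (fps_X\<^sup>2 + fps_X - 1) * qgolden - 1 = (0 :: 'a::field fps)"
proof -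
  have "(1 + fps_X * qgolden) * qgolden = 1 + fps_X * qgolden + fps_X\<^sup>2 * (qgolden :: 'a fps)"
    using prepend11_cleared[of qgolden] by (simp add: prepend11_qgolden)
  then show ?thesis
    by (simp add: algebra_simps power2_eq_square)
qed

lemma cf_val_Cons: "as \<noteq> [] \<Longrightarrow> cf_val (a # as) = real a + 1 / cf_val as"
  by (cases as) simp_all

lemma cf_val_ge_hd: "as \<noteq> [] \<Longrightarrow> \<forall>a\<in>set as. a \<ge> 1 \<Longrightarrow> real (hd as) \<le> cf_val as"
proof (induction as rule: cf_val.induct)
  case (3 a a' as)
  then have "real a' \<le> cf_val (a' # as)" and "a' \<ge> 1"
    by simp_all
  then show ?case
    by simp
qed simp_all

lemma cf_val_ge_1:
  assumes "as \<noteq> []" and "\<forall>a\<in>set as. a \<ge> 1"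
  shows "1 \<le> cf_val as"
proof -
  have "1 \<le> real (hd as)"
    using assms by simp
  with cf_val_ge_hd[OF assms] show ?thesis
    by linarith
qed

lemma cf_val_gt_hd:
  assumes "length as \<ge> 2" and "\<forall>a\<in>set as. a \<ge> 1"
  shows "real (hd as) < cf_val as"
proof -
  obtain a a' as' where as: "as = a # a' # as'"
    using assms(1) by (metis One_nat_def Suc_1 Suc_le_length_iff)
  have "1 \<le> cf_val (a' # as')"
    using cf_val_ge_1[of "a' # as'"] assms(2) as by simp
  then show ?thesis
    using as by simp
qed

lemma cf_val_gt_1:
  assumes "as \<noteq> []" and "even (length as)" and "\<forall>a\<in>set as. a \<ge> 1"
  shows "1 < cf_val as"
proof -
  have "length as \<noteq> 0"
    using assms(1) by simp
  with assms(2) have "2 \<le> length as"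
    by presburger
  moreover have "1 \<le> real (hd as)"
    using assms(1,3) by simp
  ultimately show ?thesis
    using cf_val_gt_hd[OF _ assms(3)] by fastforce
qed

lemma cf_val_Cons_even_not_nat:
  assumes "as \<noteq> []" and "even (length as)" and "\<forall>a\<in>set as. a \<ge> 1"
  shows "cf_val (b # as) \<noteq> real a"
proof
  assume eq: "cf_val (b # as) = real a"
  have "1 < cf_val as"
    using assms by (rule cf_val_gt_1)
  then have "0 < 1 / cf_val as" and "1 / cf_val as < 1"
    by simp_all
  moreover have "real a = real b + 1 / cf_val as"
    using eq assms(1) by (simp add: cf_val_Cons)
  ultimately have "real b < real a" and "real a < real b + 1"
    by linarith+
  then show False
    by (simp flip: of_nat_Suc)
qed

text \<open>The parity of the length removes the ambiguity \<open>[\<dots>, a, 1] = [\<dots>, a + 1]\<close>.\<close>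

lemma cf_val_inject:
  assumes "as \<noteq> []" "bs \<noteq> []" "\<forall>a\<in>set as. a \<ge> 1" "\<forall>b\<in>set bs. b \<ge> 1"
    and "even (length as) = even (length bs)" and "cf_val as = cf_val bs"
  shows "as = bs"
  using assms
proof (induction as arbitrary: bs)
  case (Cons a as)
  obtain b bs' where bs: "bs = b # bs'"
    using Cons.prems(2) by (cases bs) auto
  consider "as = []" "bs' = []" | "as = []" "bs' \<noteq> []" | "as \<noteq> []" "bs' = []"
    | "as \<noteq> []" "bs' \<noteq> []"
    by blast
  then show ?case
  proof cases
    case 1
    then show ?thesis
      using Cons.prems(6) bs by simp
  next
    case 2
    then show ?thesis
      using Cons.prems bs cf_val_Cons_even_not_nat[of bs' b a] by simp
  next
    case 3
    then show ?thesis
      using Cons.prems bs cf_val_Cons_even_not_nat[of as a b] by simp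
  next
    case 4
    define x y where "x = cf_val as" and "y = cf_val bs'"
    have "1 \<le> x" "1 \<le> y"
      unfolding x_def y_def using 4 Cons.prems(3,4) bs by (simp_all add: cf_val_ge_1)
    moreover have eq: "real a + 1 / x = real b + 1 / y"
      unfolding x_def y_def using 4 Cons.prems(6) bs by (simp add: cf_val_Cons)
    moreover have "0 < 1 / x" "1 / x \<le> 1" "0 < 1 / y" "1 / y \<le> 1"
      using \<open>1 \<le> x\<close> \<open>1 \<le> y\<close> by simp_all
    ultimately have "a = b"
      by linarith
    with eq have "x = y"
      by simp
    with 4 Cons.prems bs have "as = bs'"
      unfolding x_def y_def by (intro Cons.IH) simp_all
    with \<open>a = b\<close> bs show ?thesis
      by simp
  qed
qed simp

lemma qrat_cf_val:
  assumes "as \<noteq> []" and "even (length as)" and "\<forall>a\<in>set as. a \<ge> 1"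
  shows "qrat (cf_val as) = qcf as"
proof -
  have "cf_val as \<noteq> 1"
    using cf_val_gt_1[OF assms] by simp
  moreover have "(THE bs. bs \<noteq> [] \<and> even (length bs) \<and> (\<forall>b\<in>set bs. b \<ge> 1) \<and>
      cf_val bs = cf_val as) = as"
    using assms by (intro the_equality) (auto intro: cf_val_inject)
  ultimately show ?thesis
    by (simp add: qrat_def)
qed

lemma cf_val_append_1: "cf_val (as @ [a, 1]) = cf_val (as @ [Suc a])"
  by (induction as) (simp_all add: cf_val_Cons)

lemma qcf_aux_1_1:
  "as \<noteq> [] \<Longrightarrow> qcf_aux True (1 # 1 # as) = 1 + fls_X / (1 + fls_X_inv / qcf_aux True as)"
  by (cases as) (simp_all add: qint_def qint_inv_def)

lemma one_plus_div_one_plus_inverse_div: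
  fixes x c :: "'a::field"
  assumes "x \<noteq> 0" and "c \<noteq> 0" and "1 + x * c \<noteq> 0"
  shows "1 + x / (1 + inverse x / c) = (1 + x * c + x\<^sup>2 * c) / (1 + x * c)"
proof -
  have "1 + inverse x / c = (1 + x * c) / (x * c)"
    using assms by (simp add: field_simps)
  then show ?thesis
    using assms by (simp add: field_simps power2_eq_square)
qed

lemma fps_to_fls_prepend11:
  fixes b :: "'a::field fps"
  assumes "b $ 0 = 1"
  shows "fps_to_fls (prepend11 b) = 1 + fls_X / (1 + fls_X_inv / fps_to_fls b)"
proof -
  define B where "B = fps_to_fls b"
  have "B \<noteq> 0"
    unfolding B_def using assms by auto
  have "1 + fps_X * b \<noteq> 0"
    by (rule fps_nonzeroI[of _ 0]) simp
  moreover have "fps_to_fls (1 + fps_X * b) = 1 + fls_X * B"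
    unfolding B_def by (simp add: fls_times_fps_to_fls)
  ultimately have U: "1 + fls_X * B \<noteq> 0"
    by (metis fps_to_fls_eq_0_iff)
  have "fps_to_fls ((1 + fps_X * b) * prepend11 b) = fps_to_fls (1 + fps_X * b + fps_X\<^sup>2 * b)"
    by (simp only: prepend11_cleared)
  then have "(1 + fls_X * B) * fps_to_fls (prepend11 b) = 1 + fls_X * B + fls_X\<^sup>2 * B"
    unfolding B_def by (simp add: fls_times_fps_to_fls fps_to_fls_power)
  then have "fps_to_fls (prepend11 b) = (1 + fls_X * B + fls_X\<^sup>2 * B) / (1 + fls_X * B)"
    using U by (simp add: field_simps)
  also have "\<dots> = 1 + fls_X / (1 + inverse fls_X / B)"
    by (rule one_plus_div_one_plus_inverse_div[symmetric, OF fls_X_nonzero \<open>B \<noteq> 0\<close> U])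
  finally show ?thesis
    unfolding B_def fls_inverse_X .
qed

lemma qcf_replicate_1_append:
  assumes "as \<noteq> []" and "qcf as = fps_to_fls b" and "b $ 0 = 1"
  shows "qcf (replicate (2 * n) 1 @ as) = fps_to_fls ((prepend11 ^^ n) b)"
proof (induction n)
  case (Suc n)
  have "qcf (replicate (2 * Suc n) 1 @ as) = qcf_aux True (1 # 1 # (replicate (2 * n) 1 @ as))"
    by (simp add: qcf_def numeral_2_eq_2)
  also have "\<dots> = 1 + fls_X / (1 + fls_X_inv / fps_to_fls ((prepend11 ^^ n) b))"
    using Suc.IH by (subst qcf_aux_1_1) (use assms(1) in \<open>simp_all add: qcf_def\<close>)
  also have "\<dots> = fps_to_fls ((prepend11 ^^ Suc n) b)"
    using assms(3) by (simp add: fps_to_fls_prepend11)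
  finally show ?case .
qed (use assms(2) in simp)

lemma replicate_plus_2: "replicate (k + 2) x = replicate k x @ [x, x]"
  by (induction k) simp_all

lemma qrat_replicate_1_even:
  "qrat (cf_val (replicate (2 * n + 2) 1)) = fps_to_fls ((prepend11 ^^ n) (1 + fps_X))"
proof -
  have "qrat (cf_val (replicate (2 * n + 2) 1)) = qrat (cf_val (replicate (2 * n) 1 @ [1, 1]))"
    by (simp only: replicate_plus_2)
  also have "\<dots> = qcf (replicate (2 * n) 1 @ [1, 1])"
    by (rule qrat_cf_val) auto
  also have "\<dots> = fps_to_fls ((prepend11 ^^ n) (1 + fps_X))"
    by (rule qcf_replicate_1_append) (simp_all add: qcf_def qint_def qint_inv_def)
  finally show ?thesis .
qed

lemma qrat_replicate_1_odd:
  "qrat (cf_val (replicate (2 * n + 1) 1)) = fps_to_fls ((prepend11 ^^ n) 1)"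
proof (cases n)
  case 0
  then show ?thesis
    by (simp add: qrat_def)
next
  case (Suc m)
  then have "qrat (cf_val (replicate (2 * n + 1) 1)) = qrat (cf_val (replicate (2 * m + 1 + 2) 1))"
    by (simp add: algebra_simps)
  also have "\<dots> = qrat (cf_val ((replicate (2 * m) 1 @ [1]) @ [1, 1]))"
    by (simp only: replicate_plus_2 replicate_append_same flip: Suc_eq_plus1 replicate_Suc)
  also have "\<dots> = qrat (cf_val ((replicate (2 * m) 1 @ [1]) @ [Suc 1]))"
    by (simp only: cf_val_append_1)
  also have "\<dots> = qrat (cf_val (replicate (2 * m) 1 @ [1, 2]))"
    by (simp add: numeral_2_eq_2)
  also have "\<dots> = qcf (replicate (2 * m) 1 @ [1, 2])"
    by (rule qrat_cf_val) auto
  also have "\<dots> = fps_to_fls ((prepend11 ^^ m) (prepend11 1))"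
    by (rule qcf_replicate_1_append)
      (simp_all add: qcf_def qint_def qint_inv_def fps_to_fls_prepend11 numeral_2_eq_2)
  also have "\<dots> = fps_to_fls ((prepend11 ^^ n) 1)"
    using Suc by (simp add: funpow_Suc_right del: funpow.simps)
  finally show ?thesis .
qed

lemma golden_bounds: "1 < golden" "golden < 2"
proof -
  have "1 < sqrt 5" and "sqrt 5 < 3"
    by (simp_all add: real_less_rsqrt real_sqrt_less_iff real_less_lsqrt)
  then show "1 < golden" "golden < 2"
    unfolding golden_def by simp_all
qed

lemma golden_minus_1_times_golden: "(golden - 1) * golden = 1"
proof -
  have "(golden - 1) * golden = (sqrt 5 * sqrt 5 - 1) / 4"
    unfolding golden_def by (simp add: field_simps)
  then show ?thesis
    by simp
qed

lemma floor_golden: "\<lfloor>golden\<rfloor> = 1"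
  using golden_bounds by (simp add: floor_eq_iff)

lemma cf_rem_golden: "cf_rem golden n = golden"
proof (induction n)
  case (Suc n)
  have "1 / (golden - 1) = golden"
    using golden_minus_1_times_golden golden_bounds by (simp add: field_simps)
  then show ?case
    using Suc by (simp add: floor_golden)
qed simp

lemma convergent_cf_golden: "convergent_cf golden n = cf_val (replicate n 1)"
proof -
  have "cf_digit golden = (\<lambda>_. 1)"
    by (simp add: fun_eq_iff cf_digit_def cf_rem_golden floor_golden)
  then show ?thesis
    unfolding convergent_cf_def by (simp add: map_replicate_const)
qed

lemma qrat_convergent_golden_nth:
  assumes "2 * k \<le> n"
  shows "fls_nth (qrat (convergent_cf golden (Suc n))) (int k) = qgolden $ k"
proof (cases "even n")
  case True
  then obtain m where "n = 2 * m"
    by (rule evenE)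
  then have "Suc n = 2 * m + 1" and "k \<le> m"
    using assms by simp_all
  then show ?thesis
    using qrat_replicate_1_odd[of m]
    by (simp add: convergent_cf_golden funpow_prepend11_nth_eq_qgolden del: replicate.simps)
next
  case False
  then obtain m where "n = 2 * m + 1"
    by (rule oddE)
  then have "Suc n = 2 * m + 2" and "k \<le> m"
    using assms by simp_all
  then show ?thesis
    using qrat_replicate_1_even[of m]
    by (simp add: convergent_cf_golden funpow_prepend11_nth_eq_qgolden del: replicate.simps)
qed

lemma qreal_golden: "qreal golden = qgolden"
proof (rule fps_ext)
  fix k
  have "(\<lambda>n. fls_nth (qrat (convergent_cf golden (Suc n))) (int k)) \<longlonglongrightarrow> qgolden $ k"
    by (rule tendsto_eventually)
      (use qrat_convergent_golden_nth in \<open>auto simp: eventually_at_top_linorder\<close>)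
  then show "qreal golden $ k = qgolden $ k"
    unfolding qreal_def by (simp add: limI)
qed

theorem mainTheorem7:
  shows "fps_X * (qreal golden)\<^sup>2 - (fps_X\<^sup>2 + fps_X - 1) * qreal golden - 1 = 0"
  unfolding qreal_golden by (rule qgolden_quadratic)

end
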